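(* For non-negative integers $n,p$ define \begin{multline*} g(n,p)=\frac{4p^2+6p+2}{n+2p+2}+4p+(4p^2+4np+4n+10p+6)2^{1-n}+2^{-2p}\\ +2^{-n-2p}\sum_{i=1}^{p+1} i\Big\{2\binom{n+2p+4}{n+2i+1}-\binom{n+2p+4}{n+2i+2}-(2n+4p+6)\binom{2p+4}{2i+1}\Big\}\\ +2^{2-n}\sum_{i=1}^{p+1}\sum_{k=2i-1}^{2p+1} i\,2^{-k}\Big\{\frac{n+2p+1}{n+2p+2}\binom{n+k+2}{n+2i+1}-\binom{n+k+2}{n+2i}+\binom{k+3}{2i+1}\Big\}\\ +2^{-2p}\sum_{i=1}^{p+1}\sum_{k=1}^{n} i\,2^{-k}\Big\{\binom{k+2p+4}{k+2i+2}-\frac{2n+4p+6}{n+2p+2}\binom{k+2p+3}{k+2i+1}\Big\}. \end{multline*} Then $g(n,p)=0$ for all integers $n,p\ge0$.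
   Context: $\binom{a}{b}=\frac{a!}{b!(a-b)!}$ for integers $0\le b\le a$. A sum with no terms equals $0$. *)

theory Defs
  imports Complex_Main
begin

definition g :: "nat \<Rightarrow> nat \<Rightarrow> real" where
  "g n p =
     (4 * real p ^ 2 + 6 * real p + 2) / (real n + 2 * real p + 2)
   + 4 * real p
   + (4 * real p ^ 2 + 4 * real n * real p + 4 * real n + 10 * real p + 6) * (2::real) powi (1 - int n)
   + (2::real) powi (- 2 * int p)
   + (2::real) powi (- int n - 2 * int p) *
       (\<Sum>i=1..p+1. real i *
          (2 * real ((n + 2*p + 4) choose (n + 2*i + 1))
           - real ((n + 2*p + 4) choose (n + 2*i + 2))
           - (2 * real n + 4 * real p + 6) * real ((2*p + 4) choose (2*i + 1))))
   + (2::real) powi (2 - int n) *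
       (\<Sum>i=1..p+1. \<Sum>k=2*i-1..2*p+1. real i * (2::real) powi (- int k) *
          ((real n + 2 * real p + 1) / (real n + 2 * real p + 2) * real ((n + k + 2) choose (n + 2*i + 1))
           - real ((n + k + 2) choose (n + 2*i))
           + real ((k + 3) choose (2*i + 1))))
   + (2::real) powi (- 2 * int p) *
       (\<Sum>i=1..p+1. \<Sum>k=1..n. real i * (2::real) powi (- int k) *
          (real ((k + 2*p + 4) choose (k + 2*i + 2))
           - (2 * real n + 4 * real p + 6) / (real n + 2 * real p + 2) * real ((k + 2*p + 3) choose (k + 2*i + 1))))"

end

theory Submission
  imports Defs
begin

text \<open>
  Write \<open>T\<^sub>M(r) = (\<Sum>j\<ge>r. M choose j)\<close> for the tails of the rows of Pascal's triangle.
  Since \<open>T\<^sub>N\<^sub>+\<^sub>1(r+1) = 2 T\<^sub>N(r+1) + (N choose r)\<close>, each inner \<open>k\<close>-sum of \<open>g\<close>, a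
  \<open>2\<^sup>-\<^sup>k\<close>-weighted sum along a diagonal of the triangle (after reflecting the binomials of the
  last one), telescopes into a difference of two tails. The tails of row \<open>n+2p+4\<close> produced in
  this way cancel summand by summand once they are rewritten with the symmetry
  \<open>T\<^sub>M(r) + T\<^sub>M(M+1-r) = 2\<^sup>M\<close>. What is left are four \<open>i\<close>-weighted sums of tails of the rows
  \<open>2p+4\<close> and \<open>2p+5\<close>, independent of \<open>n\<close>; applying Pascal's rule twice gives a linear
  recurrence in \<open>p\<close> for them, and their closed forms make \<open>g\<close> vanish identically.
\<close>

definition binomial_tail :: "nat \<Rightarrow> nat \<Rightarrow> real" where
  "binomial_tail M r = (\<Sum>j=r..M. real (M choose j))"

lemma binomial_tail_eq_0: "M < r \<Longrightarrow> binomial_tail M r = 0"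
  unfolding binomial_tail_def by simp

lemma binomial_tail_Suc: "binomial_tail M r = real (M choose r) + binomial_tail M (Suc r)"
proof (cases "r \<le> M")
  case True
  then show ?thesis unfolding binomial_tail_def by (simp add: sum.atLeast_Suc_atMost)
next
  case False
  then show ?thesis by (simp add: binomial_tail_eq_0)
qed

lemma binomial_tail_0: "binomial_tail M 0 = 2 ^ M"
  unfolding binomial_tail_def
  by (metis choose_row_sum atMost_atLeast0 of_nat_numeral of_nat_power of_nat_sum)

lemma binomial_tail_1: "binomial_tail M 1 = 2 ^ M - 1"
  using binomial_tail_Suc[of M 0] by (simp add: binomial_tail_0)

lemma binomial_tail_2: "binomial_tail M 2 = 2 ^ M - 1 - real M"
  using binomial_tail_Suc[of M 1] binomial_tail_1[of M] by (simp add: numeral_2_eq_2)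

lemma binomial_tail_self: "binomial_tail M M = 1"
  using binomial_tail_Suc[of M M] by (simp add: binomial_tail_eq_0)

lemma binomial_tail_Suc_Suc:
  "binomial_tail (Suc M) (Suc r) = binomial_tail M (Suc r) + binomial_tail M r"
proof -
  have "binomial_tail (Suc M) (Suc r) = (\<Sum>j=r..M. real (Suc M choose Suc j))"
    unfolding binomial_tail_def by (simp only: sum.shift_bounds_cl_Suc_ivl o_def)
  also have "\<dots> = binomial_tail M r + (\<Sum>j=r..M. real (M choose Suc j))"
    unfolding binomial_tail_def by (simp only: binomial_Suc_Suc of_nat_add sum.distrib)
  also have "(\<Sum>j=r..M. real (M choose Suc j)) = (\<Sum>j=Suc r..Suc M. real (M choose j))"
    by (simp only: sum.shift_bounds_cl_Suc_ivl o_def)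
  also have "\<dots> = binomial_tail M (Suc r)"
    unfolding binomial_tail_def by (cases "Suc r \<le> Suc M") (simp_all add: sum.cl_ivl_Suc)
  finally show ?thesis by simp
qed

lemma binomial_tail_complement:
  "r \<le> Suc M \<Longrightarrow> binomial_tail M r + binomial_tail M (Suc M - r) = 2 ^ M"
proof (induction r)
  case 0
  then show ?case by (simp add: binomial_tail_0 binomial_tail_eq_0)
next
  case (Suc r)
  have "binomial_tail M (M - r) = real (M choose r) + binomial_tail M (Suc M - r)"
    using binomial_tail_Suc[of M "M - r"] Suc.prems
    by (simp add: Suc_diff_le binomial_symmetric[symmetric])
  then show ?case using Suc binomial_tail_Suc[of M r] by simp
qed

lemma sum_binomial_div_power2:
  assumes "a \<le> Suc b"
  shows "(\<Sum>k=a..b. real ((c + k) choose r) / 2 ^ k)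
    = 2 * binomial_tail (c + Suc b) (Suc r) / 2 ^ Suc b - 2 * binomial_tail (c + a) (Suc r) / 2 ^ a"
  using assms
proof (induction b)
  case 0
  then show ?case by (cases a) (auto simp: binomial_tail_Suc_Suc binomial_tail_Suc[of c r] field_simps)
next
  case (Suc b)
  show ?case
  proof (cases "a = Suc (Suc b)")
    case True
    then show ?thesis by simp
  next
    case False
    then have "a \<le> Suc b" using Suc.prems by simp
    have "binomial_tail (c + Suc (Suc b)) (Suc r)
        = 2 * binomial_tail (c + Suc b) (Suc r) + real ((c + Suc b) choose r)"
      using binomial_tail_Suc_Suc[of "c + Suc b" r] binomial_tail_Suc[of "c + Suc b" r] by simp
    then have "2 * binomial_tail (c + Suc (Suc b)) (Suc r) / 2 ^ Suc (Suc b)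
        = 2 * binomial_tail (c + Suc b) (Suc r) / 2 ^ Suc b + real ((c + Suc b) choose r) / 2 ^ Suc b"
      by (simp add: field_simps)
    with \<open>a \<le> Suc b\<close> show ?thesis using Suc.IH by (simp add: sum.cl_ivl_Suc)
  qed
qed

definition odd_tail_moment :: "nat \<Rightarrow> real" where
  "odd_tail_moment p = (\<Sum>j\<le>p. real (j+1) * binomial_tail (2*p+4) (2*j+3))"

definition even_tail_moment :: "nat \<Rightarrow> real" where
  "even_tail_moment p = (\<Sum>j\<le>p. real (j+1) * binomial_tail (2*p+4) (2*j+4))"

definition odd_tail_sum :: "nat \<Rightarrow> real" where
  "odd_tail_sum p = (\<Sum>j\<le>p. binomial_tail (2*p+4) (2*j+3))"

definition even_tail_sum :: "nat \<Rightarrow> real" where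
  "even_tail_sum p = (\<Sum>j\<le>p. binomial_tail (2*p+4) (2*j+4))"

lemma sum_binomial_tail_Suc_Suc:
  "(\<Sum>j\<le>q. f j * binomial_tail (Suc (Suc M)) (2*j+s+2))
    = (\<Sum>j\<le>q. f j * binomial_tail M (2*j+s+2)) + 2 * (\<Sum>j\<le>q. f j * binomial_tail M (2*j+s+1))
      + (\<Sum>j\<le>q. f j * binomial_tail M (2*j+s))"
proof -
  have "binomial_tail (Suc (Suc M)) (2*j+s+2)
      = binomial_tail M (2*j+s+2) + 2 * binomial_tail M (2*j+s+1) + binomial_tail M (2*j+s)" for j
    using binomial_tail_Suc_Suc[of "Suc M" "2*j+s+1"] binomial_tail_Suc_Suc[of M "2*j+s+1"]
      binomial_tail_Suc_Suc[of M "2*j+s"] by simp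
  then show ?thesis by (simp add: sum.distrib sum_distrib_left algebra_simps)
qed

lemma sum_binomial_tail_drop_last:
  "M < 2 * Suc p + s \<Longrightarrow> (\<Sum>j\<le>Suc p. f j * binomial_tail M (2*j+s))
    = (\<Sum>j\<le>p. f j * binomial_tail M (2*j+s))"
  by (simp add: binomial_tail_eq_0)

lemma sum_binomial_tail_drop_first:
  "(\<Sum>j\<le>Suc q. f j * binomial_tail M (2*j+s))
    = f 0 * binomial_tail M s + (\<Sum>j\<le>q. f (Suc j) * binomial_tail M (2*j+s+2))"
  unfolding sum.atMost_Suc_shift by simp

lemma tail_moments_Suc:
  fixes p :: nat
  defines "M \<equiv> 2*p+4"
  shows "odd_tail_moment (Suc p) = 2 * odd_tail_moment p + 2 * even_tail_moment p
      + odd_tail_sum p + 2 * even_tail_sum p + binomial_tail M 1 + 2 * binomial_tail M 2"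
    and "even_tail_moment (Suc p) = 2 * odd_tail_moment p + 2 * even_tail_moment p
      + even_tail_sum p + binomial_tail M 2"
    and "odd_tail_sum (Suc p) = 2 * odd_tail_sum p + 2 * even_tail_sum p
      + binomial_tail M 1 + 2 * binomial_tail M 2"
    and "even_tail_sum (Suc p) = 2 * odd_tail_sum p + 2 * even_tail_sum p + binomial_tail M 2"
proof -
  have M: "2 * Suc p + 4 = Suc (Suc M)" by (simp add: M_def)
  have shifted_moment: "(\<Sum>j\<le>p. real (Suc j + 1) * binomial_tail M (2*j+s))
      = (\<Sum>j\<le>p. real (j + 1) * binomial_tail M (2*j+s)) + (\<Sum>j\<le>p. binomial_tail M (2*j+s))" for s
    by (simp add: sum.distrib[symmetric] algebra_simps)
  have last: "(\<Sum>j\<le>Suc p. f j * binomial_tail M (2*j+s)) = (\<Sum>j\<le>p. f j * binomial_tail M (2*j+s))"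
    if "3 \<le> s" for f s
    using that by (intro sum_binomial_tail_drop_last) (simp add: M_def)
  note expand = sum_binomial_tail_Suc_Suc[where q="Suc p" and M=M]
  note first = sum_binomial_tail_drop_first[where q=p and M=M]
  show "odd_tail_moment (Suc p) = 2 * odd_tail_moment p + 2 * even_tail_moment p
      + odd_tail_sum p + 2 * even_tail_sum p + binomial_tail M 1 + 2 * binomial_tail M 2"
    using expand[of "\<lambda>j. real (j+1)" 1] first[of "\<lambda>j. real (j+1)" 1] first[of "\<lambda>j. real (j+1)" 2]
      last[of 3 "\<lambda>j. real (j+1)"] shifted_moment[of 3] shifted_moment[of 4]
    unfolding odd_tail_moment_def even_tail_moment_def odd_tail_sum_def even_tail_sum_def M
    by (simp add: M_def eval_nat_numeral)
  show "even_tail_moment (Suc p) = 2 * odd_tail_moment p + 2 * even_tail_moment p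
      + even_tail_sum p + binomial_tail M 2"
    using expand[of "\<lambda>j. real (j+1)" 2] first[of "\<lambda>j. real (j+1)" 2]
      last[of 3 "\<lambda>j. real (j+1)"] last[of 4 "\<lambda>j. real (j+1)"] shifted_moment[of 4]
    unfolding odd_tail_moment_def even_tail_moment_def odd_tail_sum_def even_tail_sum_def M
    by (simp add: M_def eval_nat_numeral)
  show "odd_tail_sum (Suc p) = 2 * odd_tail_sum p + 2 * even_tail_sum p
      + binomial_tail M 1 + 2 * binomial_tail M 2"
    using expand[of "\<lambda>_. 1" 1] first[of "\<lambda>_. 1" 1] first[of "\<lambda>_. 1" 2] last[of 3 "\<lambda>_. 1"]
    unfolding odd_tail_sum_def even_tail_sum_def M
    by (simp add: M_def eval_nat_numeral)
  show "even_tail_sum (Suc p) = 2 * odd_tail_sum p + 2 * even_tail_sum p + binomial_tail M 2"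
    using expand[of "\<lambda>_. 1" 2] first[of "\<lambda>_. 1" 2] last[of 3 "\<lambda>_. 1"] last[of 4 "\<lambda>_. 1"]
    unfolding odd_tail_sum_def even_tail_sum_def M
    by (simp add: M_def eval_nat_numeral)
qed

lemma tail_moments_closed_form:
  "odd_tail_moment p = 4 ^ p * (real p + 1) * (2 * real p + 5)
   \<and> even_tail_moment p = 4 ^ p * (real p + 1) * (2 * real p + 1)
   \<and> odd_tail_sum p = 4 ^ p * (8 * real p + 4) + 1
   \<and> even_tail_sum p = 4 ^ p * (8 * real p - 4) + 2 * real p + 5"
proof (induction p)
  case 0
  have "(4::nat) choose 3 = 4" by (simp add: numeral_eq_Suc)
  then have "binomial_tail 4 3 = 5" "binomial_tail 4 4 = 1"
    using binomial_tail_Suc[of 4 3] binomial_tail_self[of 4] by simp_all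
  then show ?case
    by (simp add: odd_tail_moment_def even_tail_moment_def odd_tail_sum_def even_tail_sum_def)
next
  case (Suc p)
  have "(2::real) ^ (2*p+4) = 16 * 4 ^ p" by (simp add: power_add power_mult)
  then have "binomial_tail (2*p+4) 1 = 16 * 4 ^ p - 1"
    and "binomial_tail (2*p+4) 2 = 16 * 4 ^ p - 2 * real p - 5"
    using binomial_tail_1[of "2*p+4"] binomial_tail_2[of "2*p+4"] by simp_all
  then show ?case using Suc.IH by (simp add: tail_moments_Suc algebra_simps)
qed

lemma sum_atLeast1_atMost_shift: "(\<Sum>i=1..p+1. f i) = (\<Sum>j\<le>p. f (Suc j))"
  using sum.atLeast1_atMost_eq[of f "Suc p"] by (simp del: sum.lessThan_Suc add: lessThan_Suc_atMost)

lemma sum_weighted_choose_odd: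
  "(\<Sum>i=1..p+1. real i * real ((2*p+4) choose (2*i+1))) = 4 ^ (p+1) * (real p + 1)"
proof -
  have "binomial_tail (2*p+4) (2*j+3) = real ((2*p+4) choose (2*j+3)) + binomial_tail (2*p+4) (2*j+4)" for j
    using binomial_tail_Suc[of "2*p+4" "2*j+3"] by (simp add: eval_nat_numeral)
  then have "(\<Sum>i=1..p+1. real i * real ((2*p+4) choose (2*i+1))) = odd_tail_moment p - even_tail_moment p"
    unfolding sum_atLeast1_atMost_shift odd_tail_moment_def even_tail_moment_def sum_subtractf[symmetric]
    by (intro sum.cong) (simp_all add: algebra_simps eval_nat_numeral)
  then show ?thesis using tail_moments_closed_form[of p] by (simp add: algebra_simps)
qed

lemma sum_weighted_binomial_tail_even:
  "(\<Sum>i=1..p+1. real i * binomial_tail (2*p+5) (2*i+2)) = 4 ^ p * (real p + 1) * (4 * real p + 6)"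
proof -
  have "binomial_tail (2*p+5) (2*j+4) = binomial_tail (2*p+4) (2*j+4) + binomial_tail (2*p+4) (2*j+3)" for j
    using binomial_tail_Suc_Suc[of "2*p+4" "2*j+3"] by (simp add: eval_nat_numeral)
  then have "(\<Sum>i=1..p+1. real i * binomial_tail (2*p+5) (2*i+2)) = odd_tail_moment p + even_tail_moment p"
    unfolding sum_atLeast1_atMost_shift odd_tail_moment_def even_tail_moment_def sum.distrib[symmetric]
    by (intro sum.cong) (simp_all add: algebra_simps eval_nat_numeral)
  then show ?thesis using tail_moments_closed_form[of p] by (simp add: algebra_simps)
qed

lemma sum_of_nat_Suc_atMost: "(\<Sum>j\<le>p. real (j+1)) = (real p + 1) * (real p + 2) / 2"
  by (induction p) (simp_all add: field_simps)

lemma sum_weighted_binomial_tail_reflected: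
  "(\<Sum>i=1..p+1. real i * binomial_tail (2*p+4) (2*p+3-2*i)) = 4 ^ p * (real p + 1) * (6 * real p + 15)"
proof -
  have reduced: "(\<Sum>i=1..p+1. real i * binomial_tail (2*p+4) (2*p+3-2*i))
      = 2 ^ (2*p+4) * (\<Sum>j\<le>p. real (j+1)) - even_tail_moment p"
    unfolding sum_atLeast1_atMost_shift even_tail_moment_def sum_distrib_left sum_subtractf[symmetric]
  proof (intro sum.cong refl)
    fix j assume "j \<in> {..p}"
    then have complement: "binomial_tail (2*p+4) (2*p+3 - 2 * Suc j) = 2 ^ (2*p+4) - binomial_tail (2*p+4) (2*j+4)"
      using binomial_tail_complement[of "2*j+4" "2*p+4"] by (simp add: Suc_diff_le eval_nat_numeral)
    show "real (Suc j) * binomial_tail (2*p+4) (2*p+3 - 2 * Suc j)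
        = 2 ^ (2*p+4) * real (j+1) - real (j+1) * binomial_tail (2*p+4) (2*j+4)"
      unfolding complement by (simp add: algebra_simps)
  qed
  have "(2::real) ^ (2*p+4) = 16 * 4 ^ p" by (simp add: power_add power_mult)
  then show ?thesis using tail_moments_closed_form[of p] unfolding reduced sum_of_nat_Suc_atMost
    by (simp add: field_simps)
qed

lemma sum_weighted_binomial_tail_shifted:
  "(\<Sum>j\<le>p. real (j+1) * binomial_tail (2*p+4) (2*j+5)) = odd_tail_moment p - odd_tail_sum p"
proof -
  have "(\<Sum>j\<le>p. real (j+1) * binomial_tail (2*p+4) (2*j+5))
      = (\<Sum>j\<le>Suc p. real j * binomial_tail (2*p+4) (2*j+3))"
    by (subst sum_binomial_tail_drop_first) (simp add: eval_nat_numeral)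
  also have "\<dots> = (\<Sum>j\<le>p. real j * binomial_tail (2*p+4) (2*j+3))"
    by (rule sum_binomial_tail_drop_last) simp
  also have "\<dots> = odd_tail_moment p - odd_tail_sum p"
    unfolding odd_tail_moment_def odd_tail_sum_def sum_subtractf[symmetric]
    by (intro sum.cong) (simp_all add: algebra_simps)
  finally show ?thesis .
qed

lemma sum_weighted_binomial_tail_reflected_Suc:
  "(\<Sum>i=1..p+1. real i * binomial_tail (2*p+5) (2*p+3-2*i))
    = 4 ^ p * (12 * (real p)^2 + 46 * real p + 30) + 1"
proof -
  have reduced: "(\<Sum>i=1..p+1. real i * binomial_tail (2*p+5) (2*p+3-2*i))
      = 2 ^ (2*p+5) * (\<Sum>j\<le>p. real (j+1)) - (odd_tail_moment p - odd_tail_sum p) - even_tail_moment p"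
    unfolding sum_atLeast1_atMost_shift even_tail_moment_def sum_weighted_binomial_tail_shifted[symmetric]
      sum_distrib_left sum_subtractf[symmetric]
  proof (intro sum.cong refl)
    fix j assume "j \<in> {..p}"
    then have "binomial_tail (2*p+5) (2*p+3 - 2 * Suc j) = 2 ^ (2*p+5) - binomial_tail (2*p+5) (2*j+5)"
      using binomial_tail_complement[of "2*j+5" "2*p+5"] by (simp add: Suc_diff_le eval_nat_numeral)
    moreover have "binomial_tail (2*p+5) (2*j+5) = binomial_tail (2*p+4) (2*j+5) + binomial_tail (2*p+4) (2*j+4)"
      using binomial_tail_Suc_Suc[of "2*p+4" "2*j+4"] by (simp add: eval_nat_numeral)
    ultimately have complement: "binomial_tail (2*p+5) (2*p+3 - 2 * Suc j)
        = 2 ^ (2*p+5) - binomial_tail (2*p+4) (2*j+5) - binomial_tail (2*p+4) (2*j+4)"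
      by simp
    show "real (Suc j) * binomial_tail (2*p+5) (2*p+3 - 2 * Suc j)
        = 2 ^ (2*p+5) * real (j+1) - real (j+1) * binomial_tail (2*p+4) (2*j+5)
          - real (j+1) * binomial_tail (2*p+4) (2*j+4)"
      unfolding complement by (simp add: algebra_simps)
  qed
  have "(2::real) ^ (2*p+5) = 32 * 4 ^ p" by (simp add: power_add power_mult)
  then show ?thesis using tail_moments_closed_form[of p] unfolding reduced sum_of_nat_Suc_atMost
    by (simp add: field_simps power2_eq_square)
qed

lemma power_int_2_neg: "(2::real) powi (- int k) = 1 / 2 ^ k"
  by (simp add: power_int_minus inverse_eq_divide)

lemma g_second_inner_sum:
  fixes a :: real
  assumes "1 \<le> i" "i \<le> p+1"
  shows "(\<Sum>k=2*i-1..2*p+1. 2 powi (- int k) * (a * real ((n+k+2) choose (n+2*i+1))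
            - real ((n+k+2) choose (n+2*i)) + real ((k+3) choose (2*i+1))))
    = (a * binomial_tail (n+2*p+4) (n+2*i+2) - binomial_tail (n+2*p+4) (n+2*i+1)
        + binomial_tail (2*p+5) (2*i+2)) / 2 ^ (2*p+1)"
proof -
  have bounds: "2*i-1 \<le> Suc (2*p+1)" "n + 2 + Suc (2*p+1) = n+2*p+4" "3 + Suc (2*p+1) = 2*p+5"
    "n + 2 + (2*i-1) = n+2*i+1" "3 + (2*i-1) = 2*i+2"
    using assms by simp_all
  have "(\<Sum>k=2*i-1..2*p+1. real ((n+k+2) choose r) / 2 ^ k)
      = 2 * binomial_tail (n+2*p+4) (Suc r) / 2 ^ (2*p+2) - 2 * binomial_tail (n+2*i+1) (Suc r) / 2 ^ (2*i-1)"
    for r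
    using sum_binomial_div_power2[OF bounds(1), of "n+2" r] unfolding bounds(2,4) by (simp add: ac_simps)
  from this[of "n+2*i+1"] this[of "n+2*i"]
  have first: "(\<Sum>k=2*i-1..2*p+1. real ((n+k+2) choose (n+2*i+1)) / 2 ^ k)
      = 2 * binomial_tail (n+2*p+4) (n+2*i+2) / 2 ^ (2*p+2)"
    and second: "(\<Sum>k=2*i-1..2*p+1. real ((n+k+2) choose (n+2*i)) / 2 ^ k)
      = 2 * binomial_tail (n+2*p+4) (n+2*i+1) / 2 ^ (2*p+2) - 2 / 2 ^ (2*i-1)"
    by (simp_all add: binomial_tail_eq_0 binomial_tail_self)
  have third: "(\<Sum>k=2*i-1..2*p+1. real ((k+3) choose (2*i+1)) / 2 ^ k)
      = 2 * binomial_tail (2*p+5) (2*i+2) / 2 ^ (2*p+2) - 2 / 2 ^ (2*i-1)"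
    using sum_binomial_div_power2[OF bounds(1), of 3 "2*i+1"] unfolding bounds(3,5)
    by (simp add: ac_simps binomial_tail_self)
  have "(\<Sum>k=2*i-1..2*p+1. 2 powi (- int k) * (a * real ((n+k+2) choose (n+2*i+1))
            - real ((n+k+2) choose (n+2*i)) + real ((k+3) choose (2*i+1))))
      = a * (\<Sum>k=2*i-1..2*p+1. real ((n+k+2) choose (n+2*i+1)) / 2 ^ k)
        - (\<Sum>k=2*i-1..2*p+1. real ((n+k+2) choose (n+2*i)) / 2 ^ k)
        + (\<Sum>k=2*i-1..2*p+1. real ((k+3) choose (2*i+1)) / 2 ^ k)"
    unfolding sum_distrib_left sum_subtractf[symmetric] sum.distrib[symmetric]
    by (rule sum.cong) (simp_all add: power_int_2_neg field_simps)
  also have "\<dots> = (a * binomial_tail (n+2*p+4) (n+2*i+2) - binomial_tail (n+2*p+4) (n+2*i+1)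
        + binomial_tail (2*p+5) (2*i+2)) / 2 ^ (2*p+1)"
    unfolding first second third by (simp add: field_simps)
  finally show ?thesis .
qed

lemma sum_binomial_reflected_div_power2:
  assumes "e \<le> d"
  shows "(\<Sum>k=1..n. real ((k + d) choose (k + e)) / 2 ^ k)
    = binomial_tail (n + d + 1) (d - e + 1) / 2 ^ n - binomial_tail (d + 1) (d - e + 1)"
proof -
  have "(k + d) choose (k + e) = (d + k) choose (d - e)" for k
    using binomial_symmetric[of "k + e" "k + d"] assms by (simp add: add.commute)
  then have "(\<Sum>k=1..n. real ((k + d) choose (k + e)) / 2 ^ k) = (\<Sum>k=1..n. real ((d + k) choose (d - e)) / 2 ^ k)"
    by simp
  also have "\<dots> = binomial_tail (n + d + 1) (d - e + 1) / 2 ^ n - binomial_tail (d + 1) (d - e + 1)"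
    using sum_binomial_div_power2[of 1 n d "d - e"] by (simp add: add.commute)
  finally show ?thesis .
qed

lemma g_third_inner_sum:
  fixes b :: real
  assumes "i \<le> p+1"
  shows "(\<Sum>k=1..n. 2 powi (- int k) * (real ((k+2*p+4) choose (k+2*i+2))
            - b * real ((k+2*p+3) choose (k+2*i+1))))
    = binomial_tail (n+2*p+5) (2*p+3-2*i) / 2 ^ n - binomial_tail (2*p+5) (2*p+3-2*i)
      - b * (binomial_tail (n+2*p+4) (2*p+3-2*i) / 2 ^ n - binomial_tail (2*p+4) (2*p+3-2*i))"
proof -
  have "2*p+4 - (2*i+2) + 1 = 2*p+3-2*i" "2*p+3 - (2*i+1) + 1 = 2*p+3-2*i"
    using assms by simp_all
  then have first: "(\<Sum>k=1..n. real ((k+2*p+4) choose (k+2*i+2)) / 2 ^ k)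
      = binomial_tail (n+2*p+5) (2*p+3-2*i) / 2 ^ n - binomial_tail (2*p+5) (2*p+3-2*i)"
    and second: "(\<Sum>k=1..n. real ((k+2*p+3) choose (k+2*i+1)) / 2 ^ k)
      = binomial_tail (n+2*p+4) (2*p+3-2*i) / 2 ^ n - binomial_tail (2*p+4) (2*p+3-2*i)"
    using sum_binomial_reflected_div_power2[of "2*i+2" "2*p+4" n]
      sum_binomial_reflected_div_power2[of "2*i+1" "2*p+3" n] assms
    by (simp_all add: ac_simps)
  have "(\<Sum>k=1..n. 2 powi (- int k) * (real ((k+2*p+4) choose (k+2*i+2))
            - b * real ((k+2*p+3) choose (k+2*i+1))))
      = (\<Sum>k=1..n. real ((k+2*p+4) choose (k+2*i+2)) / 2 ^ k)
        - b * (\<Sum>k=1..n. real ((k+2*p+3) choose (k+2*i+1)) / 2 ^ k)"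
    unfolding sum_distrib_left sum_subtractf[symmetric]
    by (rule sum.cong) (simp_all add: power_int_2_neg field_simps del: binomial_Suc_Suc)
  then show ?thesis unfolding first second .
qed

lemma g_summand:
  fixes n p i :: nat
  defines "N \<equiv> real n + 2 * real p + 2" and "K \<equiv> 2 * real n + 4 * real p + 6"
  assumes "1 \<le> i" "i \<le> p+1"
  shows "(2::real) powi (- int n - 2 * int p) * (real i *
          (2 * real ((n + 2*p + 4) choose (n + 2*i + 1))
           - real ((n + 2*p + 4) choose (n + 2*i + 2))
           - K * real ((2*p + 4) choose (2*i + 1))))
     + (2::real) powi (2 - int n) * (\<Sum>k=2*i-1..2*p+1. real i * (2::real) powi (- int k) *
          ((real n + 2 * real p + 1) / N * real ((n + k + 2) choose (n + 2*i + 1))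
           - real ((n + k + 2) choose (n + 2*i))
           + real ((k + 3) choose (2*i + 1))))
     + (2::real) powi (- 2 * int p) * (\<Sum>k=1..n. real i * (2::real) powi (- int k) *
          (real ((k + 2*p + 4) choose (k + 2*i + 2))
           - K / N * real ((k + 2*p + 3) choose (k + 2*i + 1))))
   = 2 / (2 ^ n * 4 ^ p) * (real i * binomial_tail (2*p+5) (2*i+2))
     - K / (2 ^ n * 4 ^ p) * (real i * real ((2*p+4) choose (2*i+1)))
     - 32 / N * real i
     + K / (N * 4 ^ p) * (real i * binomial_tail (2*p+4) (2*p+3-2*i))
     - 1 / 4 ^ p * (real i * binomial_tail (2*p+5) (2*p+3-2*i))"
proof -
  define m where "m = n + 2*p + 4"
  have "N > 0" by (simp add: N_def)
  have "(2::real) powi (- int n - 2 * int p) = 2 powi (- int (n + 2*p))"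
    "(2::real) powi (- 2 * int p) = 2 powi (- int (2*p))"
    by simp_all
  then have powers: "(2::real) powi (- int n - 2 * int p) = 1 / (2 ^ n * 4 ^ p)"
    "(2::real) powi (- 2 * int p) = 1 / 4 ^ p" "(2::real) powi (2 - int n) = 4 / 2 ^ n"
    "(2::real) ^ (2*p+1) = 2 * 4 ^ p" "(2::real) ^ m = 16 * 2 ^ n * 4 ^ p"
    "(2::real) ^ Suc m = 32 * 2 ^ n * 4 ^ p"
    unfolding power_int_2_neg by (simp_all add: m_def power_int_diff power_add power_mult)
  have middle: "(\<Sum>k=2*i-1..2*p+1. real i * (2::real) powi (- int k) *
          ((real n + 2 * real p + 1) / N * real ((n + k + 2) choose (n + 2*i + 1))
           - real ((n + k + 2) choose (n + 2*i)) + real ((k + 3) choose (2*i + 1))))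
      = real i * (((real n + 2 * real p + 1) / N * binomial_tail m (n+2*i+2) - binomial_tail m (n+2*i+1)
        + binomial_tail (2*p+5) (2*i+2)) / 2 ^ (2*p+1))"
    unfolding mult.assoc sum_distrib_left[symmetric] g_second_inner_sum[OF assms(3,4)] m_def ..
  have last: "(\<Sum>k=1..n. real i * (2::real) powi (- int k) *
          (real ((k + 2*p + 4) choose (k + 2*i + 2)) - K / N * real ((k + 2*p + 3) choose (k + 2*i + 1))))
      = real i * (binomial_tail (Suc m) (2*p+3-2*i) / 2 ^ n - binomial_tail (2*p+5) (2*p+3-2*i)
        - K / N * (binomial_tail m (2*p+3-2*i) / 2 ^ n - binomial_tail (2*p+4) (2*p+3-2*i)))"
    unfolding mult.assoc sum_distrib_left[symmetric] g_third_inner_sum[OF assms(4)] m_def by (simp add: ac_simps)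
  have choose: "real ((n + 2*p + 4) choose (n + 2*i + 1)) = binomial_tail m (n+2*i+1) - binomial_tail m (n+2*i+2)"
    "real ((n + 2*p + 4) choose (n + 2*i + 2)) = binomial_tail m (n+2*i+2) - binomial_tail m (n+2*i+3)"
    using binomial_tail_Suc[of m "n+2*i+1"] binomial_tail_Suc[of m "n+2*i+2"]
    by (simp_all add: m_def eval_nat_numeral)
  have "Suc m - (n+2*i+2) = 2*p+3-2*i" "Suc (Suc m) - (n+2*i+3) = 2*p+3-2*i"
    using assms by (simp_all add: m_def)
  then have complement: "binomial_tail m (2*p+3-2*i) = 2 ^ m - binomial_tail m (n+2*i+2)"
    "binomial_tail (Suc m) (2*p+3-2*i) = 2 ^ Suc m - binomial_tail m (n+2*i+3) - binomial_tail m (n+2*i+2)"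
    using binomial_tail_complement[of "n+2*i+2" m] binomial_tail_complement[of "n+2*i+3" "Suc m"]
      binomial_tail_Suc_Suc[of m "n+2*i+2"] assms
    by (simp_all add: m_def eval_nat_numeral)
  have NK: "real n + 2 * real p + 1 = N - 1" "K = 2 * N + 2"
    by (simp_all add: N_def K_def)
  show ?thesis
    unfolding middle last choose complement powers unfolding NK using \<open>N > 0\<close>
    by (simp add: field_simps)
qed

lemma g_eq_tail_sums:
  fixes n p :: nat
  defines "N \<equiv> real n + 2 * real p + 2" and "K \<equiv> 2 * real n + 4 * real p + 6"
  shows "g n p = (4 * real p ^ 2 + 6 * real p + 2) / N + 4 * real p
     + (4 * real p ^ 2 + 4 * real n * real p + 4 * real n + 10 * real p + 6) * (2 / 2 ^ n) + 1 / 4 ^ p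
     + (2 / (2 ^ n * 4 ^ p) * (\<Sum>i=1..p+1. real i * binomial_tail (2*p+5) (2*i+2))
     - K / (2 ^ n * 4 ^ p) * (\<Sum>i=1..p+1. real i * real ((2*p+4) choose (2*i+1)))
     - 32 / N * (\<Sum>i=1..p+1. real i)
     + K / (N * 4 ^ p) * (\<Sum>i=1..p+1. real i * binomial_tail (2*p+4) (2*p+3-2*i))
     - 1 / 4 ^ p * (\<Sum>i=1..p+1. real i * binomial_tail (2*p+5) (2*p+3-2*i)))"
proof -
  let ?A = "\<lambda>i. real i * (2 * real ((n + 2*p + 4) choose (n + 2*i + 1))
           - real ((n + 2*p + 4) choose (n + 2*i + 2))
           - K * real ((2*p + 4) choose (2*i + 1)))"
  let ?B = "\<lambda>i. \<Sum>k=2*i-1..2*p+1. real i * (2::real) powi (- int k) *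
          ((real n + 2 * real p + 1) / N * real ((n + k + 2) choose (n + 2*i + 1))
           - real ((n + k + 2) choose (n + 2*i))
           + real ((k + 3) choose (2*i + 1)))"
  let ?D = "\<lambda>i. \<Sum>k=1..n. real i * (2::real) powi (- int k) *
          (real ((k + 2*p + 4) choose (k + 2*i + 2))
           - K / N * real ((k + 2*p + 3) choose (k + 2*i + 1)))"
  have sums: "(2::real) powi (- int n - 2 * int p) * (\<Sum>i=1..p+1. ?A i)
      + (2::real) powi (2 - int n) * (\<Sum>i=1..p+1. ?B i) + (2::real) powi (- 2 * int p) * (\<Sum>i=1..p+1. ?D i)
    = 2 / (2 ^ n * 4 ^ p) * (\<Sum>i=1..p+1. real i * binomial_tail (2*p+5) (2*i+2))
     - K / (2 ^ n * 4 ^ p) * (\<Sum>i=1..p+1. real i * real ((2*p+4) choose (2*i+1)))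
     - 32 / N * (\<Sum>i=1..p+1. real i)
     + K / (N * 4 ^ p) * (\<Sum>i=1..p+1. real i * binomial_tail (2*p+4) (2*p+3-2*i))
     - 1 / 4 ^ p * (\<Sum>i=1..p+1. real i * binomial_tail (2*p+5) (2*p+3-2*i))"
    (is "?lhs = ?rhs")
  proof -
    have "?lhs = (\<Sum>i=1..p+1. (2::real) powi (- int n - 2 * int p) * ?A i
        + (2::real) powi (2 - int n) * ?B i + (2::real) powi (- 2 * int p) * ?D i)"
      by (simp only: sum.distrib sum_distrib_left)
    also have "\<dots> = (\<Sum>i=1..p+1. 2 / (2 ^ n * 4 ^ p) * (real i * binomial_tail (2*p+5) (2*i+2))
       - K / (2 ^ n * 4 ^ p) * (real i * real ((2*p+4) choose (2*i+1)))
       - 32 / N * real i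
       + K / (N * 4 ^ p) * (real i * binomial_tail (2*p+4) (2*p+3-2*i))
       - 1 / 4 ^ p * (real i * binomial_tail (2*p+5) (2*p+3-2*i)))"
      unfolding N_def K_def by (intro sum.cong refl g_summand) simp_all
    also have "\<dots> = ?rhs"
      by (simp only: sum.distrib sum_subtractf sum_distrib_left)
    finally show ?thesis .
  qed
  have "(2::real) powi (1 - int n) = 2 / 2 ^ n"
    by (simp add: power_int_diff)
  moreover have "(2::real) powi (- 2 * int p) = 1 / 4 ^ p"
    using power_int_2_neg[of "2*p"] by (simp add: power_mult)
  ultimately show ?thesis
    unfolding g_def N_def[symmetric] K_def[symmetric] sums[symmetric] by (simp only: add.assoc)
qed

theorem lemma13:
  fixes n p :: nat
  shows "g n p = 0"
proof -
  define N where "N = real n + 2 * real p + 2"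
  define x where "x = (2::real) ^ n"
  define y where "y = (4::real) ^ p"
  have gauss: "(\<Sum>i=1..p+1. real i) = (real p + 1) * (real p + 2) / 2"
    using sum_of_nat_Suc_atMost[of p] unfolding sum_atLeast1_atMost_shift by simp
  have K: "2 * real n + 4 * real p + 6 = 2 * N + 2" by (simp add: N_def)
  have y_Suc: "(4::real) ^ (p+1) = 4 * y" by (simp add: y_def)
  have "x \<noteq> 0" "y \<noteq> 0" "N \<noteq> 0" by (simp_all add: x_def y_def N_def)
  then show ?thesis
    unfolding g_eq_tail_sums gauss sum_weighted_choose_odd sum_weighted_binomial_tail_even
      sum_weighted_binomial_tail_reflected sum_weighted_binomial_tail_reflected_Suc
      N_def[symmetric] x_def[symmetric] y_def[symmetric] K y_Suc
    by (simp add: field_simps) (insert N_def, algebra)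
qed

end
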